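(* Let $n\geqslant 1$, let $B=\{g,e\}$ and let $Q$ be the set of monoid relations on $B$: (Q1) $g^n=1$; (Q2) $e^2=e$; (Q3) $eg^{n-j+i}eg^{n-i+j}=g^{n-j+i}eg^{n-i+j}e$ for $1\leqslant i<j\leqslant n$; (Q4) $g(eg^{n-1})^n=(eg^{n-1})^n$. Then $\langle B\mid Q\rangle$ is a monoid presentation of $\mathcal{CI}_n$ with respect to the map $g\mapsto g$, $e\mapsto e_1$. It has $2$ generators and $\frac12(n^2-n+6)$ relations.
   Context: Let $\Omega_n=\{1,\ldots,n\}$, $\mathcal{I}_n$ the symmetric inverse monoid on $\Omega_n$ (maps on the right, composed left to right). $g$ is the permutation $ig=i+1$ ($1\leqslant i\leqslant n-1$), $ng=1$; $\mathcal{C}_n=\{1,g,\ldots,g^{n-1}\}$; $\mathcal{CI}_n=\{\alpha\in\mathcal{I}_n\mid \alpha=\sigma|_{\mathrm{Dom}(\alpha)}\text{ for some }\sigma\in\mathcal{C}_n\}$; $e_1$ is the partial identity on $\Omega_n\setminus\{1\}$. A presentation $\langle B\mid Q\rangle$ defines a monoid $M$ via a map $\phi:B\to M$ if $\phi$ is injective, $B\phi$ generates $M$, and the induced homomorphism $B^*\to M$ has kernel equal to the smallest congruence on $B^*$ containing $Q$. *)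

theory Defs
  imports Main
begin

type_synonym pmap = "nat \<Rightarrow> nat option"

text \<open>Composition with maps on the right: x (a \<cdot> b) = (x a) b, i.e. first a, then b.\<close>
definition pcomp :: "pmap \<Rightarrow> pmap \<Rightarrow> pmap" where
  "pcomp a b = b \<circ>\<^sub>m a"

definition pid :: "nat \<Rightarrow> pmap" where
  "pid n = (\<lambda>i. if i \<in> {1..n} then Some i else None)"

definition sym_inv :: "nat \<Rightarrow> pmap set" where
  "sym_inv n = {\<alpha>. dom \<alpha> \<subseteq> {1..n} \<and> ran \<alpha> \<subseteq> {1..n} \<and> inj_on \<alpha> (dom \<alpha>)}"

definition gperm :: "nat \<Rightarrow> pmap" where
  "gperm n = (\<lambda>i. if 1 \<le> i \<and> i < n then Some (i + 1) else if i = n \<and> 1 \<le> n then Some 1 else None)"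

primrec ppow :: "nat \<Rightarrow> pmap \<Rightarrow> nat \<Rightarrow> pmap" where
  "ppow n a 0 = pid n"
| "ppow n a (Suc k) = pcomp (ppow n a k) a"

definition cyc :: "nat \<Rightarrow> pmap set" where
  "cyc n = {ppow n (gperm n) k | k. k < n}"

definition CI :: "nat \<Rightarrow> pmap set" where
  "CI n = {\<alpha> \<in> sym_inv n. \<exists>\<sigma> \<in> cyc n. \<alpha> = \<sigma> |` dom \<alpha>}"

definition e1 :: "nat \<Rightarrow> pmap" where
  "e1 n = pid n |` ({1..n} - {1})"

definition word_eval :: "('m \<Rightarrow> 'm \<Rightarrow> 'm) \<Rightarrow> 'm \<Rightarrow> ('b \<Rightarrow> 'm) \<Rightarrow> 'b list \<Rightarrow> 'm" where
  "word_eval mult one \<phi> w = foldl (\<lambda>acc x. mult acc (\<phi> x)) one w"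

inductive rel_cong :: "('b list \<times> 'b list) set \<Rightarrow> 'b list \<Rightarrow> 'b list \<Rightarrow> bool"
  for Q where
  base: "(u, v) \<in> Q \<Longrightarrow> rel_cong Q u v"
| refl: "rel_cong Q u u"
| sym: "rel_cong Q u v \<Longrightarrow> rel_cong Q v u"
| trans: "rel_cong Q u v \<Longrightarrow> rel_cong Q v w \<Longrightarrow> rel_cong Q u w"
| ctxt: "rel_cong Q u v \<Longrightarrow> rel_cong Q (x @ u @ y) (x @ v @ y)"

definition defines_monoid ::
  "('b list \<times> 'b list) set \<Rightarrow> 'm set \<Rightarrow> ('m \<Rightarrow> 'm \<Rightarrow> 'm) \<Rightarrow> 'm \<Rightarrow> ('b \<Rightarrow> 'm) \<Rightarrow> bool" where
  "defines_monoid Q M mult one \<phi> \<longleftrightarrow>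
     inj \<phi> \<and>
     M = range (word_eval mult one \<phi>) \<and>
     (\<forall>u v. word_eval mult one \<phi> u = word_eval mult one \<phi> v \<longleftrightarrow> rel_cong Q u v)"

datatype gen = G | E

abbreviation gp :: "nat \<Rightarrow> gen list" where
  "gp k \<equiv> replicate k G"

definition phiCI :: "nat \<Rightarrow> gen \<Rightarrow> pmap" where
  "phiCI n x = (case x of G \<Rightarrow> gperm n | E \<Rightarrow> e1 n)"

text \<open>Relations (Q1)-(Q4), as a list (with multiplicities, indexed as in the paper).\<close>
definition Q3rel :: "nat \<Rightarrow> nat \<Rightarrow> nat \<Rightarrow> gen list \<times> gen list" where
  "Q3rel n i j = ([E] @ gp (n - j + i) @ [E] @ gp (n - i + j),
                  gp (n - j + i) @ [E] @ gp (n - i + j) @ [E])"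

definition Qlist :: "nat \<Rightarrow> (gen list \<times> gen list) list" where
  "Qlist n =
     [(gp n, [])] @
     [([E, E], [E])] @
     [Q3rel n i j. i \<leftarrow> [1..<n+1], j \<leftarrow> [i+1..<n+1]] @
     [([G] @ concat (replicate n ([E] @ gp (n - 1))), concat (replicate n ([E] @ gp (n - 1))))]"

end

theory Submission
  imports Defs "HOL-Number_Theory.Cong"
begin

text \<open>
  Every element of CI_n is a power g^k (k < n) restricted to a subset of Omega_n. The conjugates
  e_i = g^(n-i+1) e g^(i-1) of e = e_1 evaluate to the partial identities on Omega_n - {i};
  (Q1)-(Q3) make them commuting idempotents and let e move past powers of g as e g^k = g^k e_(k+1).
  Hence every word is congruent to a normal form g^k e_(i_1) ... e_(i_r) with k < n and
  i_1 < ... < i_r, which evaluates to g^k restricted to the preimage of Omega_n - {i_1, ..., i_r}.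
  Distinct normal forms therefore have distinct values, except that all those with r = n evaluate
  to the empty map; (Q4) makes these congruent, as it forces g e_1 ... e_n = e_1 ... e_n.
\<close>

lemma pcomp_assoc: "pcomp (pcomp a b) c = pcomp a (pcomp b c)"
  unfolding pcomp_def by (auto simp: map_comp_def fun_eq_iff split: option.splits)

lemma word_eval_snoc: "word_eval mul one \<phi> (u @ [x]) = mul (word_eval mul one \<phi> u) (\<phi> x)"
  by (simp add: word_eval_def)

lemma word_eval_append:
  assumes assoc: "\<And>a b c. mul (mul a b) c = mul a (mul b c)"
    and one_one: "mul one one = one"
    and gen_one: "\<And>x. mul (\<phi> x) one = \<phi> x"
  shows "word_eval mul one \<phi> (u @ v) = mul (word_eval mul one \<phi> u) (word_eval mul one \<phi> v)"
proof -
  let ?ev = "word_eval mul one \<phi>"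
  have word_one: "mul (?ev w) one = ?ev w" for w
    by (induction w rule: rev_induct) (simp_all add: word_eval_def one_one assoc gen_one)
  show ?thesis
  proof (induction v rule: rev_induct)
    case Nil
    then show ?case by (simp add: word_eval_def word_one[unfolded word_eval_def])
  next
    case (snoc x v)
    then show ?case by (simp flip: append_assoc add: word_eval_snoc assoc)
  qed
qed

lemma rel_cong_append:
  "rel_cong Q u v \<Longrightarrow> rel_cong Q u' v' \<Longrightarrow> rel_cong Q (u @ u') (v @ v')"
  using rel_cong.ctxt[of Q u v "[]" u'] rel_cong.ctxt[of Q u' v' v "[]"]
  by (auto intro: rel_cong.trans)

lemma rel_cong_imp_hom_eq:
  assumes hom: "\<And>u v. h (u @ v) = mul (h u) (h v)"
    and rels: "\<And>u v. (u, v) \<in> Q \<Longrightarrow> h u = h v"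
  shows "rel_cong Q u v \<Longrightarrow> h u = h v"
  by (induction rule: rel_cong.induct) (simp_all add: rels hom)

lemma hom_eq_iff_rel_cong_if_normal_forms:
  assumes sound: "\<And>u v. rel_cong Q u v \<Longrightarrow> h u = h v"
    and normalize: "\<And>w. \<exists>w' \<in> N. rel_cong Q w w'"
    and unique: "\<And>u v. u \<in> N \<Longrightarrow> v \<in> N \<Longrightarrow> h u = h v \<Longrightarrow> rel_cong Q u v"
  shows "h u = h v \<longleftrightarrow> rel_cong Q u v"
proof
  assume "h u = h v"
  obtain u' v' where "u' \<in> N" "v' \<in> N" "rel_cong Q u u'" "rel_cong Q v v'"
    using normalize by blast
  then show "rel_cong Q u v"
    using \<open>h u = h v\<close> sound unique by (metis rel_cong.sym rel_cong.trans)
qed (rule sound)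

declare rel_cong.trans [trans]

lemma gp_append_gp: "gp a @ gp b @ xs = gp (a + b) @ xs"
  by (simp add: replicate_add)

text \<open>rot n k x = x g^k, and rot_on n k D is g^k restricted to D.\<close>

definition rot :: "nat \<Rightarrow> nat \<Rightarrow> nat \<Rightarrow> nat" where
  "rot n k x = (x - 1 + k) mod n + 1"

definition rot_on :: "nat \<Rightarrow> nat \<Rightarrow> nat set \<Rightarrow> pmap" where
  "rot_on n k D = (\<lambda>x. if x \<in> D \<and> 1 \<le> x \<and> x \<le> n then Some (rot n k x) else None)"

lemma rot_rot: "rot n k' (rot n k x) = rot n (k + k') x"
  unfolding rot_def by (simp add: mod_add_left_eq add.assoc)

lemma rot_mod: "rot n (k mod n) x = rot n k x"
  unfolding rot_def by (simp add: mod_add_right_eq)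

lemma rot_0: "1 \<le> x \<Longrightarrow> x \<le> n \<Longrightarrow> rot n 0 x = x"
  unfolding rot_def by simp

lemma rot_mult_self: "1 \<le> x \<Longrightarrow> x \<le> n \<Longrightarrow> rot n (m * n) x = x"
  using rot_mod[of n "m * n" x] rot_0 by simp

lemma rot_inj_on: "inj_on (rot n k) {1..n}"
proof
  fix x y assume xy: "x \<in> {1..n}" "y \<in> {1..n}" "rot n k x = rot n k y"
  then have "[x - 1 + k = y - 1 + k] (mod n)" unfolding rot_def cong_def by simp
  then have "[x - 1 = y - 1] (mod n)" by (simp add: cong_add_rcancel_nat)
  moreover have "x - 1 < n" "y - 1 < n" using xy by auto
  ultimately show "x = y" using xy by (auto simp: cong_def)
qed

lemma rot_cancel: "k < n \<Longrightarrow> k' < n \<Longrightarrow> rot n k x = rot n k' x \<Longrightarrow> k = k'"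
proof -
  assume k: "k < n" "k' < n" and "rot n k x = rot n k' x"
  then have "[x - 1 + k = x - 1 + k'] (mod n)" unfolding rot_def cong_def by simp
  then have "[k = k'] (mod n)" by (simp add: cong_add_lcancel_nat)
  then show ?thesis using k unfolding cong_def by simp
qed

lemma rot_eq_1_iff:
  assumes x: "1 \<le> x" "x \<le> n" and i: "1 \<le> i" "i \<le> n"
  shows "rot n (n - i + 1) x = 1 \<longleftrightarrow> x = i"
  unfolding rot_def
proof (cases "i \<le> x")
  case True
  then have "x - 1 + (n - i + 1) = (x - i) + n" "x - i < n" using x i by auto
  then have "(x - 1 + (n - i + 1)) mod n = x - i" by simp
  then show "(x - 1 + (n - i + 1)) mod n + 1 = 1 \<longleftrightarrow> x = i" using x True by simp
next
  case False
  then have "0 < x - 1 + (n - i + 1)" "x - 1 + (n - i + 1) < n" using x i by auto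
  then show "(x - 1 + (n - i + 1)) mod n + 1 = 1 \<longleftrightarrow> x = i" using False by simp
qed

lemma rot_mult_pred:
  assumes "1 \<le> x" "x \<le> n" "m < x"
  shows "rot n (m * (n - 1)) x = x - m"
proof -
  have "m * (n - 1) = m * n - m" by (simp add: diff_mult_distrib2)
  moreover have "m \<le> m * n" using assms by simp
  ultimately have "x - 1 + m * (n - 1) = (x - 1 - m) + m * n" using assms by simp
  moreover have "x - 1 - m < n" using assms by simp
  ultimately have "(x - 1 + m * (n - 1)) mod n = x - 1 - m" by simp
  then show ?thesis unfolding rot_def using assms by simp
qed

lemma rot_rot_diff: "k \<le> n \<Longrightarrow> 1 \<le> y \<Longrightarrow> y \<le> n \<Longrightarrow> rot n k (rot n (n - k) y) = y"
  using rot_rot[of n k "n - k" y] rot_mult_self[of y n 1] by simp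

lemma rot_diff_rot: "k \<le> n \<Longrightarrow> 1 \<le> y \<Longrightarrow> y \<le> n \<Longrightarrow> rot n (n - k) (rot n k y) = y"
  using rot_rot[of n "n - k" k y] rot_mult_self[of y n 1] by simp

locale cyclic_inverse_monoid =
  fixes n :: nat
  assumes n_pos: "1 \<le> n"
begin

lemma rot_range: "rot n k x \<in> {1..n}"
  using n_pos unfolding rot_def by (simp add: Suc_leI)

lemma pcomp_rot_on:
  "pcomp (rot_on n k D) (rot_on n k' D') = rot_on n (k + k') {x \<in> D. rot n k x \<in> D'}"
  using rot_range unfolding pcomp_def rot_on_def by (auto simp: map_comp_def fun_eq_iff rot_rot)

lemma rot_on_eqI:
  "D \<inter> {1..n} = D' \<inter> {1..n} \<Longrightarrow> k mod n = k' mod n \<Longrightarrow> rot_on n k D = rot_on n k' D'"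
  unfolding rot_on_def fun_eq_iff by (metis (no_types, lifting) Int_iff atLeastAtMost_iff rot_mod)

lemma rot_on_eq_empty: "D \<inter> {1..n} = {} \<Longrightarrow> rot_on n k D = Map.empty"
  unfolding rot_on_def by (auto simp: fun_eq_iff)

lemma dom_rot_on: "dom (rot_on n k D) = D \<inter> {1..n}"
  unfolding rot_on_def dom_def by auto

lemma pid_eq_rot_on: "pid n = rot_on n 0 UNIV"
  unfolding pid_def rot_on_def fun_eq_iff by (auto simp: rot_0)

lemma gperm_eq_rot_on: "gperm n = rot_on n 1 UNIV"
  unfolding gperm_def rot_on_def fun_eq_iff rot_def using n_pos by auto

lemma e1_eq_rot_on: "e1 n = rot_on n 0 (- {1})"
  unfolding e1_def pid_def rot_on_def fun_eq_iff by (auto simp: rot_0 restrict_map_def)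

lemma ppow_gperm: "ppow n (gperm n) k = rot_on n k UNIV"
  by (induction k) (simp_all add: pid_eq_rot_on gperm_eq_rot_on pcomp_rot_on)

lemma pcomp_rot_on_pid: "pcomp (rot_on n k D) (pid n) = rot_on n k D"
  unfolding pid_eq_rot_on pcomp_rot_on using rot_range by (intro rot_on_eqI) auto

abbreviation ev :: "gen list \<Rightarrow> pmap" where
  "ev \<equiv> word_eval pcomp (pid n) (phiCI n)"

lemma ev_append: "ev (u @ v) = pcomp (ev u) (ev v)"
proof (rule word_eval_append)
  show "pcomp (pid n) (pid n) = pid n"
    using pcomp_rot_on_pid[of 0 UNIV] by (simp add: pid_eq_rot_on)
  show "pcomp (phiCI n x) (pid n) = phiCI n x" for x
    by (cases x) (simp_all add: phiCI_def gperm_eq_rot_on e1_eq_rot_on pcomp_rot_on_pid)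
qed (rule pcomp_assoc)

lemma ev_Nil: "ev [] = rot_on n 0 UNIV"
  by (simp add: word_eval_def pid_eq_rot_on)

lemma ev_G: "ev [G] = rot_on n 1 UNIV"
  by (simp add: word_eval_def pid_eq_rot_on phiCI_def gperm_eq_rot_on pcomp_rot_on)

lemma ev_E: "ev [E] = rot_on n 0 (- {1})"
  by (simp add: word_eval_def pid_eq_rot_on phiCI_def e1_eq_rot_on pcomp_rot_on)
    (rule rot_on_eqI; auto simp: rot_0)

lemma ev_gp: "ev (gp k) = rot_on n k UNIV"
proof (induction k)
  case (Suc k)
  have "gp (Suc k) = gp k @ [G]" by (simp add: replicate_append_same)
  then show ?case using Suc by (simp add: ev_append ev_G pcomp_rot_on)
qed (simp add: ev_Nil)

lemma ev_eq_rot_on: "\<exists>k D. ev w = rot_on n k D"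
proof (induction w rule: rev_induct)
  case (snoc x w)
  then obtain k D where "ev w = rot_on n k D" by blast
  then show ?case by (cases x) (auto simp: ev_append ev_G ev_E pcomp_rot_on)
qed (auto simp: ev_Nil)

abbreviation eg_pow :: "nat \<Rightarrow> gen list" where
  "eg_pow m \<equiv> concat (replicate m ([E] @ gp (n - 1)))"

lemma ev_eg_pow: "m \<le> n \<Longrightarrow> ev (eg_pow m) = rot_on n (m * (n - 1)) {x. m < x}"
proof (induction m)
  case (Suc m)
  have "eg_pow (Suc m) = eg_pow m @ [E] @ gp (n - 1)"
    by (simp only: replicate_Suc replicate_append_same[symmetric] concat_append) simp
  moreover have "Suc m * (n - 1) = m * (n - 1) + (0 + (n - 1))" by simp
  ultimately show ?case using Suc n_pos
    by (simp only: ev_append ev_E ev_gp pcomp_rot_on)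
      (rule rot_on_eqI; auto simp: rot_mult_pred[simplified])
qed (simp add: ev_Nil, rule rot_on_eqI, auto)

lemma ev_eg_pow_n: "ev (eg_pow n) = Map.empty"
  using ev_eg_pow[of n] by (auto intro!: rot_on_eq_empty)

lemma ev_Qlist: "(u, v) \<in> set (Qlist n) \<Longrightarrow> ev u = ev v"
proof -
  assume "(u, v) \<in> set (Qlist n)"
  then consider "u = gp n" "v = []" | "u = [E, E]" "v = [E]"
    | i j where "1 \<le> i" "i < j" "j \<le> n" "(u, v) = Q3rel n i j"
    | "u = [G] @ eg_pow n" "v = eg_pow n"
    unfolding Qlist_def by (auto simp: less_Suc_eq_le Suc_le_eq)
  then show ?thesis
  proof cases
    case 1
    then show ?thesis by (simp add: ev_gp ev_Nil) (rule rot_on_eqI; auto)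
  next
    case 2
    then show ?thesis
      using ev_append[of "[E]" "[E]"] by (simp add: ev_E pcomp_rot_on) (rule rot_on_eqI; auto simp: rot_0)
  next
    case (3 i j)
    have "n - j + i + (n - i + j) = 2 * n" using 3 by simp
    then have "rot n (n - j + i + (n - i + j)) x = x" if "1 \<le> x" "x \<le> n" for x
      using rot_mult_self[OF that, of 2] by (simp add: mult_2)
    then show ?thesis using 3(4) unfolding Q3rel_def
      by (simp only: ev_append ev_E ev_gp pcomp_rot_on rot_rot prod.inject)
        (rule rot_on_eqI; auto simp: rot_0 rot_rot)
  next
    case 4
    then show ?thesis
      using ev_append[of "[G]" "eg_pow n"] ev_eg_pow_n by (simp add: pcomp_def)
  qed
qed

lemma ev_eq_if_rel_cong: "rel_cong (set (Qlist n)) u v \<Longrightarrow> ev u = ev v"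
  by (rule rel_cong_imp_hom_eq[where h = ev and mul = pcomp]) (simp_all add: ev_append ev_Qlist)

abbreviation cong_Q :: "gen list \<Rightarrow> gen list \<Rightarrow> bool" (infix "\<approx>" 50) where
  "u \<approx> v \<equiv> rel_cong (set (Qlist n)) u v"

lemma rel_Q1: "gp n \<approx> []"
  by (rule rel_cong.base) (simp add: Qlist_def)

lemma rel_Q2: "[E, E] \<approx> [E]"
  by (rule rel_cong.base) (simp add: Qlist_def)

lemma rel_Q3:
  "1 \<le> i \<Longrightarrow> i < j \<Longrightarrow> j \<le> n \<Longrightarrow>
     [E] @ gp (n - j + i) @ [E] @ gp (n - i + j) \<approx> gp (n - j + i) @ [E] @ gp (n - i + j) @ [E]"
  by (rule rel_cong.base) (force simp: Qlist_def Q3rel_def)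

lemma rel_Q4: "[G] @ eg_pow n \<approx> eg_pow n"
  by (rule rel_cong.base) (simp add: Qlist_def)

lemma gp_mult_add_cong: "gp (m * n + r) \<approx> gp r"
proof (induction m)
  case (Suc m)
  have "gp (Suc m * n + r) = gp n @ gp (m * n + r)"
    by (simp add: replicate_add[symmetric] add.assoc)
  also have "\<dots> \<approx> [] @ gp r"
    by (rule rel_cong_append[OF rel_Q1 Suc])
  finally show ?case by simp
qed (simp add: rel_cong.refl)

lemma gp_cong_mod: "a mod n = b mod n \<Longrightarrow> x @ gp a @ y \<approx> x @ gp b @ y"
  using gp_mult_add_cong[of "a div n" "a mod n"] gp_mult_add_cong[of "b div n" "b mod n"]
  by (intro rel_cong.ctxt) (metis div_mult_mod_eq rel_cong.sym rel_cong.trans)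

definition e_word :: "nat \<Rightarrow> gen list" where
  "e_word i = gp (n - i + 1) @ [E] @ gp (i - 1)"

lemma ev_e_word: "1 \<le> i \<Longrightarrow> i \<le> n \<Longrightarrow> ev (e_word i) = rot_on n 0 (- {i})"
  unfolding e_word_def
  by (simp only: ev_append ev_gp ev_E pcomp_rot_on)
    (rule rot_on_eqI; auto simp: rot_eq_1_iff[simplified] rot_mult_self[of _ 1, simplified])

lemma e_word_idem:
  assumes "1 \<le> i" "i \<le> n"
  shows "e_word i @ e_word i \<approx> e_word i"
proof -
  have "e_word i @ e_word i = (gp (n - i + 1) @ [E]) @ gp n @ [E] @ gp (i - 1)"
    using assms by (simp add: e_word_def gp_append_gp flip: replicate_add del: replicate.simps)
  also have "\<dots> \<approx> (gp (n - i + 1) @ [E]) @ [] @ [E] @ gp (i - 1)"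
    by (rule rel_cong.ctxt[OF rel_Q1])
  also have "\<dots> = gp (n - i + 1) @ [E, E] @ gp (i - 1)"
    by simp
  also have "\<dots> \<approx> gp (n - i + 1) @ [E] @ gp (i - 1)"
    by (rule rel_cong.ctxt[OF rel_Q2])
  finally show ?thesis unfolding e_word_def .
qed

lemma e_word_commute:
  assumes "1 \<le> i" "i < j" "j \<le> n"
  shows "e_word i @ e_word j \<approx> e_word j @ e_word i"
proof -
  define A B where "A = n - j + i" and "B = n - i + j"
  \<comment> \<open>B + A = 2n, so inserting g^(B+A) exposes the left-hand side of (Q3).\<close>
  have "e_word i @ e_word j = gp (n - i + 1) @ ([E] @ gp A @ [E]) @ gp (j - 1)"
    using assms by (simp add: e_word_def A_def gp_append_gp flip: replicate_add del: replicate.simps)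
  also have "\<dots> \<approx> gp (n - i + 1) @ ([E] @ gp A @ [E] @ gp (B + A)) @ gp (j - 1)"
    using gp_cong_mod[of 0 "B + A" "gp (n - i + 1) @ [E] @ gp A @ [E]" "gp (j - 1)"] assms
    by (simp add: A_def B_def)
  also have "\<dots> = gp (n - i + 1) @ ([E] @ gp A @ [E] @ gp B) @ gp A @ gp (j - 1)"
    by (simp add: replicate_add)
  also have "\<dots> \<approx> gp (n - i + 1) @ (gp A @ [E] @ gp B @ [E]) @ gp A @ gp (j - 1)"
    unfolding A_def B_def by (rule rel_cong.ctxt[OF rel_Q3[OF assms]])
  also have "\<dots> = gp (n - i + 1 + A) @ [E] @ gp B @ [E] @ gp (A + (j - 1))"
    by (simp add: gp_append_gp flip: replicate_add)
  also have "\<dots> \<approx> gp (n - j + 1) @ [E] @ gp B @ [E] @ gp (A + (j - 1))"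
  proof -
    have "n - i + 1 + A = (n - j + 1) + n"
      using assms by (simp add: A_def)
    then have "(n - i + 1 + A) mod n = (n - j + 1) mod n"
      by (simp only: mod_add_self2)
    from gp_cong_mod[OF this, of "[]"] show ?thesis by simp
  qed
  also have "\<dots> \<approx> gp (n - j + 1) @ [E] @ gp B @ [E] @ gp (i - 1)"
  proof -
    have "A + (j - 1) = (i - 1) + n"
      using assms by (simp add: A_def)
    then have "(A + (j - 1)) mod n = (i - 1) mod n"
      by (simp only: mod_add_self2)
    from gp_cong_mod[OF this, of "gp (n - j + 1) @ [E] @ gp B @ [E]" "[]"] show ?thesis by simp
  qed
  also have "\<dots> = e_word j @ e_word i"
    using assms by (simp add: e_word_def B_def gp_append_gp flip: replicate_add del: replicate.simps)
  finally show ?thesis .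
qed

lemma E_gp_cong: "k < n \<Longrightarrow> [E] @ gp k \<approx> gp k @ e_word (k + 1)"
  using gp_cong_mod[of 0 "k + (n - k)" "[]" "[E] @ gp k"]
  by (simp add: e_word_def gp_append_gp flip: replicate_add del: replicate.simps add: replicate_0)

definition e_prod :: "nat list \<Rightarrow> gen list" where
  "e_prod L = concat (map e_word L)"

lemma ev_e_prod: "set L \<subseteq> {1..n} \<Longrightarrow> ev (e_prod L) = rot_on n 0 (- set L)"
proof (induction L)
  case Nil
  then show ?case by (simp add: e_prod_def ev_Nil)
next
  case (Cons i L)
  then show ?case
    by (simp add: e_prod_def ev_append ev_e_word pcomp_rot_on) (rule rot_on_eqI; auto simp: rot_0)
qed

lemma e_word_insert:
  assumes "sorted_wrt (<) L" "set L \<subseteq> {1..n}" "x \<in> set L"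
  shows "e_word x @ e_prod (filter P L) \<approx> e_prod (filter (\<lambda>i. P i \<or> i = x) L)"
  using assms
proof (induction L)
  case (Cons a L)
  let ?P' = "\<lambda>i. P i \<or> i = x"
  have a: "1 \<le> a" "a \<le> n" using Cons.prems(2) by auto
  show ?case
  proof (cases "x = a")
    case True
    then have "x \<notin> set L" using Cons.prems(1) by auto
    then have "filter ?P' L = filter P L" by (auto intro: filter_cong)
    moreover have "e_word a @ e_word a @ e_prod (filter P L) \<approx> e_word a @ e_prod (filter P L)"
      using rel_cong.ctxt[OF e_word_idem[OF a], of "[]"] by simp
    ultimately show ?thesis using True by (simp add: e_prod_def rel_cong.refl)
  next
    case False
    then have "a < x" "x \<in> set L" using Cons.prems by auto
    then have IH: "e_word x @ e_prod (filter P L) \<approx> e_prod (filter ?P' L)"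
      using Cons by simp
    show ?thesis
    proof (cases "P a")
      case True
      have "e_word x @ e_prod (filter P (a # L)) = e_word x @ e_word a @ e_prod (filter P L)"
        using True by (simp add: e_prod_def)
      also have "\<dots> \<approx> e_word a @ e_word x @ e_prod (filter P L)"
        using rel_cong.ctxt[OF rel_cong.sym[OF e_word_commute], of a x "[]"] a \<open>a < x\<close>
          Cons.prems(2) \<open>x \<in> set L\<close> by auto
      also have "\<dots> \<approx> e_word a @ e_prod (filter ?P' L)"
        using rel_cong.ctxt[OF IH, of "e_word a" "[]"] by simp
      finally show ?thesis using True by (simp add: e_prod_def)
    next
      case False
      then show ?thesis using IH \<open>x \<noteq> a\<close> by (simp add: e_prod_def)
    qed
  qed
qed simp

definition nf_word :: "nat \<Rightarrow> (nat \<Rightarrow> bool) \<Rightarrow> gen list" where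
  "nf_word k P = gp k @ e_prod (filter P [1..<n+1])"

lemma ev_nf_word: "ev (nf_word k P) = rot_on n k {x. \<not> P (rot n k x)}"
proof -
  have "set (filter P [1..<n+1]) = {x \<in> {1..n}. P x}" by auto
  then have "ev (e_prod (filter P [1..<n+1])) = rot_on n 0 (- {x \<in> {1..n}. P x})"
    by (metis ev_e_prod filter_is_subset set_upt atLeastLessThanSuc_atLeastAtMost Suc_eq_plus1)
  then show ?thesis using rot_range unfolding nf_word_def
    by (simp only: ev_append ev_gp pcomp_rot_on) (rule rot_on_eqI; auto)
qed

lemma exists_nf_word: "\<exists>k P. k < n \<and> w \<approx> nf_word k P"
proof (induction w)
  case Nil
  have "[] \<approx> nf_word 0 (\<lambda>_. False)" by (simp add: nf_word_def e_prod_def rel_cong.refl)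
  then show ?case using n_pos by (intro exI[of _ 0]) auto
next
  case (Cons x w)
  then obtain k P where k: "k < n" and w: "w \<approx> nf_word k P" by blast
  let ?W = "e_prod (filter P [1..<n+1])"
  show ?case
  proof (cases x)
    case G
    have Gw: "x # w \<approx> gp (Suc k) @ ?W"
      using rel_cong.ctxt[OF w, of "[G]" "[]"] G by (simp add: nf_word_def)
    show ?thesis
    proof (cases "Suc k < n")
      case True
      then show ?thesis using Gw unfolding nf_word_def by blast
    next
      case False
      then have "Suc k = n" using k by simp
      then have "gp (Suc k) @ ?W \<approx> nf_word 0 P"
        using rel_cong.ctxt[OF rel_Q1, of "[]" ?W] by (simp add: nf_word_def)
      with Gw have "x # w \<approx> nf_word 0 P" by (rule rel_cong.trans)
      then show ?thesis using n_pos by (intro exI[of _ 0]) auto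
    qed
  next
    case E
    have "x # w \<approx> [E] @ gp k @ ?W"
      using rel_cong.ctxt[OF w, of "[E]" "[]"] E by (simp add: nf_word_def)
    also have "\<dots> \<approx> gp k @ e_word (k + 1) @ ?W"
      using rel_cong.ctxt[OF E_gp_cong[OF k], of "[]" ?W] by simp
    also have "\<dots> \<approx> gp k @ e_prod (filter (\<lambda>i. P i \<or> i = k + 1) [1..<n+1])"
    proof -
      have "e_word (k + 1) @ ?W \<approx> e_prod (filter (\<lambda>i. P i \<or> i = k + 1) [1..<n+1])"
        by (rule e_word_insert) (use k in \<open>auto simp del: upt_Suc\<close>)
      from rel_cong.ctxt[OF this, of "gp k" "[]"] show ?thesis by (simp only: append_Nil2)
    qed
    finally show ?thesis using k unfolding nf_word_def by blast
  qed
qed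

definition e_all :: "gen list" where
  "e_all = e_prod [1..<n+1]"

lemma nf_word_eq_empty:
  assumes "k < n" "ev (nf_word k P) = Map.empty"
  shows "nf_word k P = gp k @ e_all"
proof -
  have "filter P [1..<n+1] = [1..<n+1]"
  proof (rule filter_True, rule ballI)
    fix y assume "y \<in> set [1..<n+1]"
    then have y: "1 \<le> y" "y \<le> n" by auto
    have "rot_on n k {x. \<not> P (rot n k x)} (rot n (n - k) y) = None"
      using assms(2) by (simp add: ev_nf_word)
    then show "P y"
      using rot_range[of "n - k" y] rot_rot_diff[of k n y] assms(1) y
      by (auto simp: rot_on_def split: if_splits)
  qed
  then show ?thesis unfolding nf_word_def e_all_def by simp
qed

lemma G_cong_if_gp_Suc_cong:
  assumes k: "k < n" and shift: "gp (Suc k) @ w \<approx> gp k @ w"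
  shows "[G] @ w \<approx> w"
proof -
  have "n - k + Suc k = 1 + n" "n - k + k = 0 + n" using k by simp_all
  then have mods: "1 mod n = (n - k + Suc k) mod n" "(n - k + k) mod n = 0 mod n"
    by (simp_all only: mod_add_self2)
  have "[G] @ w = [] @ gp 1 @ w" by simp
  also have "\<dots> \<approx> [] @ gp (n - k + Suc k) @ w"
    using mods(1) by (rule gp_cong_mod)
  also have "\<dots> = gp (n - k) @ (gp (Suc k) @ w) @ []"
    by (simp only: gp_append_gp append_Nil append_Nil2)
  also have "\<dots> \<approx> gp (n - k) @ (gp k @ w) @ []"
    using shift by (rule rel_cong.ctxt)
  also have "\<dots> = [] @ gp (n - k + k) @ w"
    by (simp only: gp_append_gp append_Nil append_Nil2)
  also have "\<dots> \<approx> [] @ gp 0 @ w"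
    using mods(2) by (rule gp_cong_mod)
  finally show ?thesis by simp
qed

text \<open>The only use of (Q4): the normal forms of the empty map are g^k e_1 ... e_n for all k.\<close>

lemma G_e_all: "[G] @ e_all \<approx> e_all"
proof -
  obtain k P where k: "k < n" and X: "eg_pow n \<approx> nf_word k P"
    using exists_nf_word by blast
  have "ev (nf_word k P) = Map.empty"
    using ev_eq_if_rel_cong[OF X] ev_eg_pow_n by simp
  with X k have X_W: "eg_pow n \<approx> gp k @ e_all"
    using nf_word_eq_empty by simp
  have "gp (Suc k) @ e_all \<approx> [G] @ eg_pow n"
    using rel_cong.ctxt[OF rel_cong.sym[OF X_W], of "[G]" "[]"] by simp
  also have "\<dots> \<approx> gp k @ e_all"
    using rel_Q4 X_W by (rule rel_cong.trans)
  finally have "gp (Suc k) @ e_all \<approx> gp k @ e_all" .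
  with k show ?thesis by (rule G_cong_if_gp_Suc_cong)
qed

lemma gp_e_all: "gp k @ e_all \<approx> e_all"
proof (induction k)
  case (Suc k)
  have "gp (Suc k) @ e_all \<approx> gp k @ e_all"
    using rel_cong.ctxt[OF G_e_all, of "gp k" "[]"] by (simp add: replicate_app_Cons_same)
  then show ?case using Suc by (rule rel_cong.trans)
qed (simp add: rel_cong.refl)

lemma nf_word_unique:
  assumes k: "k < n" "k' < n" and eq: "ev (nf_word k P) = ev (nf_word k' P')"
  shows "nf_word k P \<approx> nf_word k' P'"
proof (cases "ev (nf_word k P) = Map.empty")
  case True
  then have "nf_word k P = gp k @ e_all" "nf_word k' P' = gp k' @ e_all"
    using nf_word_eq_empty k eq by simp_all
  then show ?thesis
    using gp_e_all[of k] rel_cong.sym[OF gp_e_all[of k']] by (simp add: rel_cong.trans)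
next
  case False
  have eq': "rot_on n k {x. \<not> P (rot n k x)} = rot_on n k' {x. \<not> P' (rot n k' x)}"
    using eq by (simp add: ev_nf_word)
  from False obtain x where "rot_on n k {x. \<not> P (rot n k x)} x \<noteq> None"
    by (auto simp: ev_nf_word fun_eq_iff)
  then have "rot n k x = rot n k' x"
    using fun_cong[OF eq', of x] by (auto simp: rot_on_def split: if_splits)
  then have "k = k'" using k by (rule rot_cancel[rotated 2])
  have same: "filter P [1..<n+1] = filter P' [1..<n+1]"
  proof (rule filter_cong)
    fix y assume "y \<in> set [1..<n+1]"
    then have y: "1 \<le> y" "y \<le> n" by auto
    let ?z = "rot n (n - k) y"
    have "rot n k ?z = y" using rot_rot_diff k y by simp
    then show "P y = P' y"
      using fun_cong[OF eq', of ?z] rot_range[of "n - k" y] \<open>k = k'\<close>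
      by (auto simp: rot_on_def split: if_splits)
  qed simp
  show ?thesis unfolding nf_word_def \<open>k = k'\<close> same by (rule rel_cong.refl)
qed

lemma rot_on_in_CI: "rot_on n k D \<in> CI n"
proof -
  have "rot_on n k D \<in> sym_inv n"
    unfolding sym_inv_def
  proof (intro CollectI conjI)
    show "dom (rot_on n k D) \<subseteq> {1..n}" by (simp add: dom_rot_on)
    show "ran (rot_on n k D) \<subseteq> {1..n}"
      using rot_range unfolding rot_on_def ran_def by (auto split: if_splits)
    show "inj_on (rot_on n k D) (dom (rot_on n k D))"
    proof (rule inj_onI)
      fix x y assume "x \<in> dom (rot_on n k D)" "y \<in> dom (rot_on n k D)"
        and "rot_on n k D x = rot_on n k D y"
      then have "x \<in> {1..n}" "y \<in> {1..n}" "rot n k x = rot n k y"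
        by (auto simp: dom_rot_on rot_on_def split: if_splits)
      then show "x = y" by (rule inj_onD[OF rot_inj_on, rotated])
    qed
  qed
  moreover have "ppow n (gperm n) (k mod n) \<in> cyc n"
    unfolding cyc_def using n_pos by auto
  moreover have "rot_on n k D = ppow n (gperm n) (k mod n) |` dom (rot_on n k D)"
    unfolding ppow_gperm dom_rot_on by (auto simp: fun_eq_iff restrict_map_def rot_on_def rot_mod)
  ultimately show ?thesis unfolding CI_def by blast
qed

lemma CI_eq_range_ev: "CI n = range ev"
proof
  show "range ev \<subseteq> CI n"
  proof (rule image_subsetI)
    fix w
    obtain k D where "ev w = rot_on n k D" using ev_eq_rot_on by blast
    then show "ev w \<in> CI n" using rot_on_in_CI by simp
  qed
next
  show "CI n \<subseteq> range ev"
  proof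
    fix a assume "a \<in> CI n"
    then obtain s where s: "s \<in> cyc n" "a = s |` dom a" and "a \<in> sym_inv n"
      unfolding CI_def by blast
    then obtain k where k: "k < n" "s = rot_on n k UNIV"
      unfolding cyc_def by (auto simp: ppow_gperm)
    have "dom a \<subseteq> {1..n}" using \<open>a \<in> sym_inv n\<close> unfolding sym_inv_def by blast
    then have "a = rot_on n k (dom a)"
      using s(2) unfolding k(2) by (auto simp: fun_eq_iff restrict_map_def rot_on_def)
    also have "\<dots> = ev (nf_word k (\<lambda>y. rot n (n - k) y \<notin> dom a))"
      unfolding ev_nf_word using rot_diff_rot k by (intro rot_on_eqI) auto
    finally show "a \<in> range ev" by blast
  qed
qed

lemma defines_monoid_CI: "defines_monoid (set (Qlist n)) (CI n) pcomp (pid n) (phiCI n)"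
  unfolding defines_monoid_def
proof (intro conjI allI)
  have "gperm n 1 \<noteq> e1 n 1" using n_pos unfolding gperm_def e1_def by auto
  then show "inj (phiCI n)"
    by (intro injI) (auto simp: phiCI_def split: gen.splits)
  show "CI n = range ev" by (rule CI_eq_range_ev)
  show "ev u = ev v \<longleftrightarrow> u \<approx> v" for u v
  proof (rule hom_eq_iff_rel_cong_if_normal_forms[where N = "{nf_word k P | k P. k < n}"])
    show "\<exists>w' \<in> {nf_word k P | k P. k < n}. w \<approx> w'" for w
      using exists_nf_word by blast
    show "ev u = ev v" if "u \<approx> v" for u v
      using that by (rule ev_eq_if_rel_cong)
    show "u \<approx> v" if u: "u \<in> {nf_word k P | k P. k < n}" and v: "v \<in> {nf_word k P | k P. k < n}"
      and eq: "ev u = ev v" for u v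
    proof -
      obtain k P k' P' where "u = nf_word k P" "k < n" "v = nf_word k' P'" "k' < n"
        using u v by blast
      then show ?thesis using nf_word_unique eq by simp
    qed
  qed
qed

end

lemma card_gen: "card (UNIV :: gen set) = 2"
proof -
  have "(UNIV :: gen set) = {G, E}" using gen.exhaust by auto
  moreover have "card {G, E} = 2" by simp
  ultimately show ?thesis by (simp only:)
qed

lemma length_concat_map_upt:
  "length (concat (map (\<lambda>i. map (f i) [i+1..<n+1]) [1..<n+1])) = \<Sum>{0..<n}"
proof -
  have "length (concat (map (\<lambda>i. map (f i) [i+1..<n+1]) [1..<n+1])) = (\<Sum>i\<in>{1..<n+1}. n - i)"
    by (simp only: length_concat map_map comp_def length_map length_upt
        sum_set_upt_conv_sum_list_nat[symmetric] set_upt) simp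
  also have "\<dots> = \<Sum>{0..<n}"
    using sum.atLeastLessThan_rev_at_least_Suc_atMost[of "\<lambda>i. i" 0 n]
    by (simp add: atLeastLessThanSuc_atLeastAtMost)
  finally show ?thesis .
qed

lemma double_sum_atLeast0_lessThan: "2 * \<Sum>{0..<n} = n ^ 2 - (n::nat)"
proof (cases n)
  case (Suc m)
  then show ?thesis
    using double_gauss_sum[where 'a = nat, of m]
    by (simp add: atLeastLessThanSuc_atLeastAtMost power2_eq_square)
qed simp

lemma length_Qlist: "2 * length (Qlist n) = n ^ 2 - n + 6"
proof -
  have "length (Qlist n) = 3 + \<Sum>{0..<n}"
    unfolding Qlist_def using length_concat_map_upt[of "Q3rel n" n] by simp
  moreover have "n \<le> n ^ 2" by (simp add: power2_eq_square)
  ultimately show ?thesis using double_sum_atLeast0_lessThan[of n] by simp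
qed

theorem theorem2p7:
  fixes n :: nat
  assumes "n \<ge> 1"
  shows "defines_monoid (set (Qlist n)) (CI n) pcomp (pid n) (phiCI n)
         \<and> card (UNIV :: gen set) = 2
         \<and> 2 * length (Qlist n) = n ^ 2 - n + 6"
proof -
  interpret cyclic_inverse_monoid n using assms by unfold_locales
  show ?thesis using defines_monoid_CI card_gen length_Qlist by blast
qed

end
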